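(* Let $R$ be a CSNC ring and let $S\subseteq R$ be a subset closed under addition, negation and multiplication which is itself a ring with an identity element $1_S$ (not necessarily equal to $1_R$). Then $S$ is a CSNC ring. In particular, for every $e\in\mathrm{Id}(R)$ the corner ring $eRe$ is a CSNC ring.
   Context: All rings are associative with identity. For a ring $R$, $\mathrm{Id}(R)$, $U(R)$, $\mathrm{Nil}(R)$ denote the sets of idempotents, units and nilpotent elements. An element $a\in R$ is clean if $a=e+u$ for some $e\in\mathrm{Id}(R)$, $u\in U(R)$. An element $a$ is strongly nil-clean if $a=e+q$ with $e\in \mathrm{Id}(R)$, $q\in\mathrm{Nil}(R)$ and $eq=qe$. A ring $R$ is called CSNC if every clean element of $R$ is strongly nil-clean. *)

theory Defs
  imports Main
begin

text \<open>Ring-theoretic notions relative to a subset S of a ring 'a (type class ring_1),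
  where S is regarded as a ring with its own identity element one (possibly different from 1).\<close>

definition idem_in :: "'a::ring_1 set \<Rightarrow> 'a set" where
  "idem_in S = {e \<in> S. e * e = e}"

definition units_in :: "'a::ring_1 set \<Rightarrow> 'a \<Rightarrow> 'a set" where
  "units_in S one = {u \<in> S. \<exists>v \<in> S. u * v = one \<and> v * u = one}"

definition nil_in :: "'a::ring_1 set \<Rightarrow> 'a set" where
  "nil_in S = {q \<in> S. \<exists>n::nat. n > 0 \<and> q ^ n = 0}"

definition clean_in :: "'a::ring_1 set \<Rightarrow> 'a \<Rightarrow> 'a \<Rightarrow> bool" where
  "clean_in S one a \<longleftrightarrow> (\<exists>e \<in> idem_in S. \<exists>u \<in> units_in S one. a = e + u)"

definition strongly_nil_clean_in :: "'a::ring_1 set \<Rightarrow> 'a \<Rightarrow> bool" where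
  "strongly_nil_clean_in S a \<longleftrightarrow>
     (\<exists>e \<in> idem_in S. \<exists>q \<in> nil_in S. a = e + q \<and> e * q = q * e)"

definition CSNC_on :: "'a::ring_1 set \<Rightarrow> 'a \<Rightarrow> bool" where
  "CSNC_on S one \<longleftrightarrow> (\<forall>a \<in> S. clean_in S one a \<longrightarrow> strongly_nil_clean_in S a)"

definition CSNC_ring :: "'a::ring_1 itself \<Rightarrow> bool" where
  "CSNC_ring _ \<longleftrightarrow> CSNC_on (UNIV :: 'a set) 1"

definition subring_with_identity :: "'a::ring_1 set \<Rightarrow> 'a \<Rightarrow> bool" where
  "subring_with_identity S one \<longleftrightarrow>
     (\<forall>x \<in> S. \<forall>y \<in> S. x + y \<in> S \<and> x * y \<in> S) \<and> (\<forall>x \<in> S. - x \<in> S) \<and>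
     one \<in> S \<and> (\<forall>x \<in> S. one * x = x \<and> x * one = x)"

end

theory Submission
  imports Defs "HOL-Computational_Algebra.Primes"
begin

text \<open>In a CSNC ring \<open>-1 = 0 + (-1)\<close> is clean, and its strongly nil-clean decomposition
  forces \<open>2\<close> to be nilpotent. If \<open>2^K = 0\<close> and \<open>q^n = 0\<close>, the binomial theorem gives
  \<open>(1 + q)^m = 1\<close> for \<open>m = 2^(K + n)\<close>; so if \<open>a = g + q\<close> with \<open>g\<close> idempotent commuting
  with \<open>q\<close>, then \<open>a^m = g (1 + q)^m + (1 - g) q^m = g\<close>, and both parts of the decomposition
  lie in any subring containing \<open>a\<close>. A clean decomposition \<open>a = e + u\<close> in a subring \<open>S\<close>
  with identity \<open>f\<close> becomes \<open>a = (e + 1 - f) + (u - (1 - f))\<close> in the whole ring, so \<open>S\<close> is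
  CSNC; corners \<open>eRe\<close> are such subrings with identity \<open>e\<close>.\<close>

lemma one_plus_power_binomial:
  "(1 + q :: 'a::ring_1) ^ n = (\<Sum>k\<le>n. of_nat (n choose k) * q ^ k)"
proof (induction n)
  case (Suc n)
  define s where "s = (\<Sum>k\<le>n. of_nat (n choose k) * q ^ k)"
  have shift: "s = 1 + (\<Sum>k\<le>n. of_nat (n choose Suc k) * q ^ Suc k)"
    unfolding s_def using sum.atMost_Suc_shift[of "\<lambda>k. of_nat (n choose k) * q ^ k" n]
    by (simp add: binomial_eq_0)
  have times_q: "s * q = (\<Sum>k\<le>n. of_nat (n choose k) * q ^ Suc k)"
    unfolding s_def by (simp add: sum_distrib_right mult.assoc power_commutes)
  have "(\<Sum>k\<le>Suc n. of_nat (Suc n choose k) * q ^ k)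
      = 1 + (\<Sum>k\<le>n. of_nat (n choose k) * q ^ Suc k + of_nat (n choose Suc k) * q ^ Suc k)"
    by (simp only: sum.atMost_Suc_shift binomial_Suc_Suc of_nat_add distrib_right) simp
  also have "\<dots> = s + s * q"
    unfolding times_q by (simp add: shift sum.distrib add_ac)
  also have "\<dots> = (1 + q) ^ Suc n"
    by (simp add: Suc s_def power_Suc2 distrib_left del: power_Suc)
  finally show ?case ..
qed simp

lemma prime_power_dvd_cancel_small_factor:
  fixes p :: nat
  assumes "prime p" "p ^ (a + b) dvd l * c" "0 < l" "l < p ^ b"
  shows "p ^ a dvd c"
  using assms(2-)
proof (induction b arbitrary: l)
  case (Suc b)
  show ?case
  proof (cases "p dvd l")
    case True
    then obtain l' where l: "l = p * l'" ..
    have "p ^ (a + b) dvd l' * c" "0 < l'" "l' < p ^ b"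
      using Suc.prems prime_gt_0_nat[OF \<open>prime p\<close>] unfolding l by (auto simp: mult.assoc)
    then show ?thesis by (rule Suc.IH)
  next
    case False
    then have "coprime (p ^ (a + Suc b)) l"
      using \<open>prime p\<close> by (simp add: prime_imp_coprime)
    then have "p ^ (a + Suc b) dvd c"
      using Suc.prems(1) coprime_dvd_mult_right_iff by blast
    then show ?thesis by (meson dvd_trans le_add1 power_le_dvd)
  qed
qed simp

lemma prime_power_dvd_binomial:
  fixes p :: nat
  assumes "prime p" "0 < l" "l < p ^ N"
  shows "p ^ K dvd (p ^ (K + N) choose l)"
  using times_binomial_minus1_eq[of l "p ^ (K + N)"]
    prime_power_dvd_cancel_small_factor[OF assms(1) _ assms(2,3)]
  by (metis assms(2) dvd_triv_left)

lemma one_plus_nilpotent_power_eq_one: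
  fixes q :: "'a::ring_1"
  assumes "prime p" "of_nat (p ^ K) = (0::'a)" "q ^ N = 0"
  shows "(1 + q) ^ (p ^ (K + N)) = 1"
proof -
  have "of_nat (p ^ (K + N) choose k) * q ^ k = (0::'a)" if "0 < k" for k
  proof (cases "k < N")
    case True
    then have "k < p ^ N"
      using prime_ge_2_nat[OF \<open>prime p\<close>] by (meson less_le_trans self_le_ge2_pow)
    then obtain c where "p ^ (K + N) choose k = p ^ K * c"
      using prime_power_dvd_binomial[OF \<open>prime p\<close> \<open>0 < k\<close>] by blast
    then show ?thesis using assms(2) by simp
  next
    case False
    then have "q ^ k = q ^ N * q ^ (k - N)" by (simp flip: power_add)
    then show ?thesis using assms(3) by simp
  qed
  then show ?thesis
    unfolding one_plus_power_binomial by (simp add: sum.atMost_shift del: sum.atMost_Suc power_Suc)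
qed

lemma power_idempotent_plus_commuting:
  fixes g q :: "'a::ring_1"
  assumes idem: "g * g = g" and comm: "g * q = q * g"
  shows "(g + q) ^ n = g * (1 + q) ^ n + (1 - g) * q ^ n"
proof (induction n)
  case (Suc n)
  have commutes: "(1 + q) ^ n * g = g * (1 + q) ^ n" "q ^ n * g = g * q ^ n"
    by (rule power_commuting_commutes; simp add: comm algebra_simps)+
  have "(g + q) ^ Suc n = (g * (1 + q) ^ n + (1 - g) * q ^ n) * (g + q)"
    by (simp only: power_Suc2 Suc)
  also have "\<dots> = g * ((1 + q) ^ n * g) + g * (1 + q) ^ n * q
                   + (1 - g) * (q ^ n * g) + (1 - g) * q ^ n * q"
    by (simp only: distrib_left distrib_right mult.assoc add_ac)
  also have "g * ((1 + q) ^ n * g) = g * (1 + q) ^ n"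
    using commutes idem by (simp flip: mult.assoc)
  also have "(1 - g) * (q ^ n * g) = 0"
    using commutes idem by (simp add: left_diff_distrib flip: mult.assoc)
  also have "g * (1 + q) ^ n + g * (1 + q) ^ n * q + 0 + (1 - g) * q ^ n * q
      = g * (1 + q) ^ Suc n + (1 - g) * q ^ Suc n"
    by (simp add: power_Suc2 mult.assoc distrib_left del: power_Suc)
  finally show ?case .
qed simp

lemma idempotent_part_eq_power:
  fixes g q :: "'a::ring_1"
  assumes "prime p" "of_nat (p ^ K) = (0::'a)"
    and "g * g = g" "g * q = q * g" "q ^ n = 0"
  shows "(g + q) ^ (p ^ (K + n)) = g"
proof -
  have "n \<le> p ^ (K + n)"
    using prime_ge_2_nat[OF \<open>prime p\<close>] by (meson le_add2 le_trans power_increasing self_le_ge2_pow)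
  then have "q ^ (p ^ (K + n)) = q ^ n * q ^ (p ^ (K + n) - n)" by (simp flip: power_add)
  then show ?thesis
    using power_idempotent_plus_commuting[OF assms(3,4)]
      one_plus_nilpotent_power_eq_one[OF assms(1,2,5)] assms(5)
    by simp
qed

lemma power_in_mult_closed:
  assumes "\<forall>x \<in> S. \<forall>y \<in> S. x * y \<in> S" "a \<in> S" "0 < m"
  shows "(a :: 'a::monoid_mult) ^ m \<in> S"
  using assms(3)
proof (induction m)
  case (Suc m)
  then show ?case
    using assms(1,2) by (cases "m = 0") auto
qed simp

lemma CSNC_ring_two_nilpotent:
  assumes "CSNC_on (UNIV :: 'a::ring_1 set) 1"
  shows "\<exists>K. of_nat (2 ^ K) = (0 :: 'a)"
proof -
  have "(0 :: 'a) \<in> idem_in UNIV" "(-1 :: 'a) \<in> units_in UNIV 1"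
    unfolding idem_in_def units_in_def by (auto intro: exI[of _ "-1"])
  then have "clean_in UNIV 1 (-1 :: 'a)"
    unfolding clean_in_def by force
  then obtain g q :: 'a and n where idem: "g * g = g" and comm: "g * q = q * g"
    and nil: "q ^ n = 0" and minus_one: "-1 = g + q"
    using assms unfolding CSNC_on_def strongly_nil_clean_in_def idem_in_def nil_in_def by blast
  have "g + 1 = - q"
    using minus_one by (metis add.commute add_minus_cancel minus_add_distrib minus_minus)
  then have "(g + 1) ^ n = (-1) ^ n * q ^ n"
    by (simp flip: power_minus)
  also have "\<dots> = 0" using nil by simp
  finally have vanishes: "(g + 1) ^ n = 0" .
  then have "g * of_nat (2 ^ n) + (1 - g) = 0"
    using power_idempotent_plus_commuting[OF idem, of 1 n] by simp
  then have "(1 - g) * (g * of_nat (2 ^ n) + (1 - g)) = 0" by simp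
  then have "g = 1"
    using idem by (simp add: algebra_simps flip: mult.assoc)
  then show ?thesis
    using vanishes by (metis one_add_one of_nat_numeral of_nat_power)
qed

lemma strongly_nil_clean_in_closed_subset:
  fixes S :: "'a::ring_1 set"
  assumes "prime p" "of_nat (p ^ K) = (0 :: 'a)"
    and closed: "\<forall>x \<in> S. \<forall>y \<in> S. x + y \<in> S \<and> x * y \<in> S" "\<forall>x \<in> S. - x \<in> S"
    and "a \<in> S" "strongly_nil_clean_in UNIV a"
  shows "strongly_nil_clean_in S a"
proof -
  obtain g q n where idem: "g * g = g" and nil: "q ^ n = 0" "0 < n"
    and a: "a = g + q" and comm: "g * q = q * g"
    using assms(6) unfolding strongly_nil_clean_in_def idem_in_def nil_in_def by blast
  have "a ^ (p ^ (K + n)) = g"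
    unfolding a by (rule idempotent_part_eq_power[OF assms(1,2) idem comm nil(1)])
  then have "g \<in> S"
    using power_in_mult_closed[of S a "p ^ (K + n)"] closed(1) \<open>a \<in> S\<close> \<open>prime p\<close>
    by (simp add: prime_gt_0_nat)
  moreover have "q \<in> S"
    using closed \<open>a \<in> S\<close> \<open>g \<in> S\<close> a by (metis add_diff_cancel_left' diff_conv_add_uminus)
  ultimately show ?thesis
    unfolding strongly_nil_clean_in_def idem_in_def nil_in_def using idem nil a comm by blast
qed

lemma clean_in_subring_imp_clean:
  assumes "subring_with_identity S one" "clean_in S one a"
  shows "clean_in UNIV 1 a"
proof -
  obtain e u v where "e \<in> S" "e * e = e" "u \<in> S" "v \<in> S" "u * v = one" "v * u = one" "a = e + u"
    using assms(2) unfolding clean_in_def idem_in_def units_in_def by blast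
  moreover have "one \<in> S" "\<forall>x \<in> S. one * x = x \<and> x * one = x"
    using assms(1) unfolding subring_with_identity_def by auto
  ultimately have "e + (1 - one) \<in> idem_in UNIV"
    and "u - (1 - one) \<in> units_in UNIV 1"
    and "a = (e + (1 - one)) + (u - (1 - one))"
    unfolding idem_in_def units_in_def
    by (auto simp: algebra_simps intro!: exI[of _ "v - (1 - one)"])
  then show ?thesis
    unfolding clean_in_def by blast
qed

lemma CSNC_on_subring_with_identity:
  assumes "CSNC_ring TYPE('a::ring_1)" "subring_with_identity S (one :: 'a)"
  shows "CSNC_on S one"
  unfolding CSNC_on_def
proof (intro ballI impI)
  fix a assume "a \<in> S" "clean_in S one a"
  have CSNC: "CSNC_on (UNIV :: 'a set) 1"
    using assms(1) unfolding CSNC_ring_def .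
  then obtain K where "of_nat (2 ^ K) = (0 :: 'a)"
    using CSNC_ring_two_nilpotent by blast
  moreover have "strongly_nil_clean_in UNIV a"
    using CSNC clean_in_subring_imp_clean[OF assms(2) \<open>clean_in S one a\<close>]
    unfolding CSNC_on_def by blast
  ultimately show "strongly_nil_clean_in S a"
    using strongly_nil_clean_in_closed_subset[OF two_is_prime_nat] assms(2) \<open>a \<in> S\<close>
    unfolding subring_with_identity_def by blast
qed

lemma subring_with_identity_corner:
  assumes "e * e = (e :: 'a::ring_1)"
  shows "subring_with_identity {e * r * e | r. True} e"
proof -
  have idem: "e * (e * x) = e * x" for x
    using assms by (simp flip: mult.assoc)
  have "e * r * e + e * s * e = e * (r + s) * e" "e * r * e * (e * s * e) = e * (r * e * s) * e"
    "- (e * r * e) = e * (- r) * e" "e * (e * r * e) = e * r * e" "e * r * e * e = e * r * e"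
    for r s
    by (simp_all add: algebra_simps idem assms)
  moreover have "e = e * 1 * e"
    using assms by simp
  ultimately show ?thesis
    unfolding subring_with_identity_def by blast
qed

theorem mainTheorem16:
  fixes S :: "'a::ring_1 set" and one :: 'a
  assumes "CSNC_ring TYPE('a)"
    and "subring_with_identity S one"
  shows "CSNC_on S one \<and>
         (\<forall>e :: 'a. e * e = e \<longrightarrow> CSNC_on {e * r * e | r. True} e)"
  using CSNC_on_subring_with_identity[OF assms(1)] assms(2) subring_with_identity_corner
  by blast

end
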